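(* Let $T,T'$ be fragment one-to-one, connected, reduced linear trellises of the same length $n$. If $C^i(T)=C^i(T')$ for some integer $i>1$, then $T$ and $T'$ are isomorphic. In particular this applies to nonmergeable, one-to-one, reduced linear trellises (e.g. minimal linear trellises).
   Context: Let $\mathbb{F}$ be a finite field and $n\ge1$; indices are taken in $\mathbb{Z}_n$. A trellis $T$ of length $n$ over $\mathbb{F}$ consists of pairwise disjoint finite vertex sets $V_i(T)$, $i\in\mathbb{Z}_n$, and edge sets $E_i(T)\subseteq V_i(T)\times\mathbb{F}\times V_{i+1}(T)$; $(v,\alpha,w)\in E_i(T)$ is an edge from $v$ to $w$ with label $\alpha$. Trellises are trim. $T$ is linear if each $V_i(T)$ is an $\mathbb{F}$-vector space and each $E_i(T)$ a subspace. A path of length $m$ is $v_0\alpha_0v_1\cdots\alpha_{m-1}v_m$ with each $(v_j,\alpha_j,v_{j+1})$ an edge (time index increasing by one mod $n$ each step); its label sequence is $\alpha_0\cdots\alpha_{m-1}$. A cycle is a closed path of length $n$ starting in $V_0(T)$; $T$ is reduced if every edge lies on some cycle; connected if for any two distinct vertices there is a directed path from one to the other; fragment one-to-one if any two distinct paths of length $n$ starting in the same vertex set $V_j(T)$ have distinct label sequences. For $i\ge1$, an $i$-cycle is a closed path of length $in$ starting in $V_0(T)$, and $C^i(T)\subseteq\mathbb{F}^{in}$ is the set of label sequences of $i$-cycles. An isomorphism $T\to T'$ is a family of bijections $f_j:V_j(T)\to V_j(T')$ with $(v,\alpha,w)\in E_j(T)\iff(f_j(v),\alpha,f_{j+1}(w))\in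 E_j(T')$. $T$ is nonmergeable if there are no $j$ and $v\ne w\in V_j(T)$ such that identifying $v,w$ yields a trellis representing the same code; one-to-one if distinct cycles have distinct label sequences; a minimal linear trellis is a linear trellis $T$ for which no linear trellis $T'$ with the same code satisfies $|V_j(T')|\le|V_j(T)|$ for all $j$ with some strict inequality. *)

theory Defs
  imports Complex_Main
begin

text \<open>Vertex sets are kept apart by their time index,
  i.e. a vertex is really a pair (j, v) with v in tverts T j.\<close>

record ('v, 'f) trellis =
  tverts :: "nat \<Rightarrow> 'v set"
  tedges :: "nat \<Rightarrow> ('v \<times> 'f \<times> 'v) set"

definition is_trellis :: "nat \<Rightarrow> ('v, 'f) trellis \<Rightarrow> bool" where
  "is_trellis n T \<longleftrightarrow> n \<ge> 1 \<and>
     (\<forall>j<n. finite (tverts T j) \<and>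
            tedges T j \<subseteq> tverts T j \<times> UNIV \<times> tverts T (Suc j mod n)) \<and>
     \<comment> \<open>trim: every vertex has an outgoing and an incoming edge\<close>
     (\<forall>j<n. \<forall>v\<in>tverts T j. (\<exists>a w. (v, a, w) \<in> tedges T j) \<and>
                             (\<exists>u a. (u, a, v) \<in> tedges T ((j + n - 1) mod n)))"

definition linear_trellis ::
  "('f::field \<Rightarrow> 'v::ab_group_add \<Rightarrow> 'v) \<Rightarrow> nat \<Rightarrow> ('v, 'f) trellis \<Rightarrow> bool" where
  "linear_trellis scale n T \<longleftrightarrow> vector_space scale \<and> is_trellis n T \<and>
     (\<forall>j<n. 0 \<in> tverts T j \<and> (\<forall>x\<in>tverts T j. \<forall>y\<in>tverts T j. x + y \<in> tverts T j) \<and>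
        (\<forall>c. \<forall>x\<in>tverts T j. scale c x \<in> tverts T j) \<and>
        (0, 0, 0) \<in> tedges T j \<and>
        (\<forall>v a w v' a' w'. (v, a, w) \<in> tedges T j \<longrightarrow> (v', a', w') \<in> tedges T j \<longrightarrow>
              (v + v', a + a', w + w') \<in> tedges T j) \<and>
        (\<forall>c v a w. (v, a, w) \<in> tedges T j \<longrightarrow> (scale c v, c * a, scale c w) \<in> tedges T j))"

definition tpath :: "nat \<Rightarrow> ('v, 'f) trellis \<Rightarrow> nat \<Rightarrow> 'v list \<Rightarrow> 'f list \<Rightarrow> bool" where
  "tpath n T j vs as \<longleftrightarrow> length vs = Suc (length as) \<and> vs ! 0 \<in> tverts T (j mod n) \<and>
     (\<forall>k<length as. (vs ! k, as ! k, vs ! Suc k) \<in> tedges T ((j + k) mod n))"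

definition icycle :: "nat \<Rightarrow> ('v, 'f) trellis \<Rightarrow> nat \<Rightarrow> 'v list \<Rightarrow> 'f list \<Rightarrow> bool" where
  "icycle n T i vs as \<longleftrightarrow> tpath n T 0 vs as \<and> length as = i * n \<and> last vs = hd vs"

definition icode :: "nat \<Rightarrow> ('v, 'f) trellis \<Rightarrow> nat \<Rightarrow> 'f list set" where
  "icode n T i = {as. \<exists>vs. icycle n T i vs as}"

definition reduced :: "nat \<Rightarrow> ('v, 'f) trellis \<Rightarrow> bool" where
  "reduced n T \<longleftrightarrow> (\<forall>j<n. \<forall>e\<in>tedges T j. \<exists>vs as. icycle n T 1 vs as \<and>
                                 (vs ! j, as ! j, vs ! Suc j) = e)"

definition reaches :: "nat \<Rightarrow> ('v, 'f) trellis \<Rightarrow> nat \<Rightarrow> 'v \<Rightarrow> nat \<Rightarrow> 'v \<Rightarrow> bool" where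
  "reaches n T j v k w \<longleftrightarrow> (\<exists>vs as. tpath n T j vs as \<and> hd vs = v \<and> last vs = w \<and>
                                  (j + length as) mod n = k)"

definition connected_trellis :: "nat \<Rightarrow> ('v, 'f) trellis \<Rightarrow> bool" where
  "connected_trellis n T \<longleftrightarrow> (\<forall>j<n. \<forall>k<n. \<forall>v\<in>tverts T j. \<forall>w\<in>tverts T k.
      (j, v) \<noteq> (k, w) \<longrightarrow> reaches n T j v k w \<or> reaches n T k w j v)"

definition fragment_one_to_one :: "nat \<Rightarrow> ('v, 'f) trellis \<Rightarrow> bool" where
  "fragment_one_to_one n T \<longleftrightarrow> (\<forall>j<n. \<forall>vs vs' as as'.
      tpath n T j vs as \<longrightarrow> tpath n T j vs' as' \<longrightarrow> length as = n \<longrightarrow> length as' = n \<longrightarrow>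
      (vs, as) \<noteq> (vs', as') \<longrightarrow> as \<noteq> as')"

definition one_to_one :: "nat \<Rightarrow> ('v, 'f) trellis \<Rightarrow> bool" where
  "one_to_one n T \<longleftrightarrow> (\<forall>vs vs' as as'. icycle n T 1 vs as \<longrightarrow> icycle n T 1 vs' as' \<longrightarrow>
      (vs, as) \<noteq> (vs', as') \<longrightarrow> as \<noteq> as')"

definition merge :: "nat \<Rightarrow> ('v, 'f) trellis \<Rightarrow> nat \<Rightarrow> 'v \<Rightarrow> 'v \<Rightarrow> ('v, 'f) trellis" where
  "merge n T j v w =
     \<lparr> tverts = (\<lambda>k. if k = j then tverts T k - {w} else tverts T k),
       tedges = (\<lambda>k. (\<lambda>(a, l, b). (if k = j \<and> a = w then v else a, l,
                                   if Suc k mod n = j \<and> b = w then v else b)) ` tedges T k) \<rparr>"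

definition nonmergeable :: "nat \<Rightarrow> ('v, 'f) trellis \<Rightarrow> bool" where
  "nonmergeable n T \<longleftrightarrow> \<not> (\<exists>j<n. \<exists>v\<in>tverts T j. \<exists>w\<in>tverts T j. v \<noteq> w \<and>
                                 icode n (merge n T j v w) 1 = icode n T 1)"

definition trellis_iso :: "nat \<Rightarrow> ('v, 'f) trellis \<Rightarrow> ('w, 'f) trellis \<Rightarrow> bool" where
  "trellis_iso n T T' \<longleftrightarrow> (\<exists>f :: nat \<Rightarrow> 'v \<Rightarrow> 'w. \<forall>j<n.
      bij_betw (f j) (tverts T j) (tverts T' j) \<and>
      (\<forall>v\<in>tverts T j. \<forall>w\<in>tverts T (Suc j mod n). \<forall>a.
         (v, a, w) \<in> tedges T j \<longleftrightarrow> (f j v, a, f (Suc j mod n) w) \<in> tedges T' j))"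

end

(*  A walk is an infinite state/label sequence following the edges of the trellis
    periodically in time.  In a linear trellis walks form a vector space, and a
    fragment one-to-one trellis determines the states on any window of n consecutive
    times from the labels there; in particular n-periodic labels force n-periodic states.

    Key lemma: if a periodic walk Z of T passes through the zero state at time j, then
    every walk of T' with the same labels is in state 0 at time j.  Indeed, one period
    of Z (from time j to time j+n) padded with zeros to length i*n is an i-cycle of T,
    which exists only because i > 1; its T'-counterpart carries zero labels right after
    the period, so its state at the end of the period is 0, while fragment one-to-one
    identifies that state with the state of the given walk at time j.  By linearity,
    "v corresponds to y if some periodic T-walk through v and some T'-walk through y
    carry the same labels" defines maps V_j(T) -> V_j(T'); these are mutually inverse
    with the maps in the other direction and preserve edges, giving the isomorphism.

    The second statement reduces to the first: a nonmergeable, one-to-one linear trellis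
    is fragment one-to-one.  Two paths of length n with equal labels differ by a
    zero-labelled path; if it is closed it yields a nonzero cycle with zero labels,
    otherwise its two endpoints can be merged without changing the code.  *)

theory Submission
  imports Defs
begin

lemma linear_trellis_pos: "linear_trellis sc n T \<Longrightarrow> 0 < n"
  by (simp add: linear_trellis_def is_trellis_def)

lemma linear_trellis_edges:
  "linear_trellis sc n T \<Longrightarrow> j < n \<Longrightarrow>
     tedges T j \<subseteq> tverts T j \<times> UNIV \<times> tverts T (Suc j mod n)"
  by (simp add: linear_trellis_def is_trellis_def)

lemma linear_trellis_out_edge:
  "linear_trellis sc n T \<Longrightarrow> j < n \<Longrightarrow> v \<in> tverts T j \<Longrightarrow> \<exists>a w. (v, a, w) \<in> tedges T j"
  by (simp add: linear_trellis_def is_trellis_def)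

lemma linear_edge_zero: "linear_trellis sc n T \<Longrightarrow> j < n \<Longrightarrow> (0, 0, 0) \<in> tedges T j"
  by (simp add: linear_trellis_def)

lemma linear_edge_add:
  "linear_trellis sc n T \<Longrightarrow> j < n \<Longrightarrow> (v, a, w) \<in> tedges T j \<Longrightarrow> (v', a', w') \<in> tedges T j
     \<Longrightarrow> (v + v', a + a', w + w') \<in> tedges T j"
  unfolding linear_trellis_def by blast

lemma linear_trellis_scale_neg:
  fixes sc :: "'f::field \<Rightarrow> 'v::ab_group_add \<Rightarrow> 'v"
  shows "linear_trellis sc n T \<Longrightarrow> sc (-1) x = - x"
  by (simp add: linear_trellis_def module.scale_minus_left module.scale_one
                module_iff_vector_space)

lemma linear_edge_diff:
  fixes sc :: "'f::field \<Rightarrow> 'v::ab_group_add \<Rightarrow> 'v"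
  assumes lin: "linear_trellis sc n T" and j: "j < n"
    and e: "(v, a, w) \<in> tedges T j" and e': "(v', a', w') \<in> tedges T j"
  shows "(v - v', a - a', w - w') \<in> tedges T j"
proof -
  have "(sc (-1) v', (-1) * a', sc (-1) w') \<in> tedges T j"
    using lin j e' unfolding linear_trellis_def by blast
  then have "(- v', - a', - w') \<in> tedges T j" by (simp add: linear_trellis_scale_neg[OF lin])
  from linear_edge_add[OF lin j e this] show ?thesis by simp
qed

lemma linear_vertex_diff:
  fixes sc :: "'f::field \<Rightarrow> 'v::ab_group_add \<Rightarrow> 'v"
  assumes lin: "linear_trellis sc n T" and j: "j < n"
    and x: "x \<in> tverts T j" and y: "y \<in> tverts T j"
  shows "x - y \<in> tverts T j"
proof -
  have "sc (-1) y \<in> tverts T j" using lin j y unfolding linear_trellis_def by blast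
  then have "- y \<in> tverts T j" by (simp add: linear_trellis_scale_neg[OF lin])
  then have "x + - y \<in> tverts T j" using lin j x unfolding linear_trellis_def by blast
  then show ?thesis by simp
qed

section \<open>Walks\<close>

definition walk :: "nat \<Rightarrow> ('v, 'f) trellis \<Rightarrow> (nat \<Rightarrow> 'v) \<Rightarrow> (nat \<Rightarrow> 'f) \<Rightarrow> bool" where
  "walk n T X A \<longleftrightarrow> (\<forall>k. (X k, A k, X (Suc k)) \<in> tedges T (k mod n))"

definition periodic_walk ::
  "nat \<Rightarrow> ('v, 'f) trellis \<Rightarrow> (nat \<Rightarrow> 'v) \<Rightarrow> (nat \<Rightarrow> 'f) \<Rightarrow> bool" where
  "periodic_walk n T X A \<longleftrightarrow>
     walk n T X A \<and> (\<forall>k. X (k + n) = X k) \<and> (\<forall>k. A (k + n) = A k)"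

lemma walk_zero: "linear_trellis sc n T \<Longrightarrow> walk n T (\<lambda>_. 0) (\<lambda>_. 0)"
  unfolding walk_def using linear_edge_zero linear_trellis_pos by fastforce

lemma walk_diff:
  fixes sc :: "'f::field \<Rightarrow> 'v::ab_group_add \<Rightarrow> 'v"
  assumes lin: "linear_trellis sc n T" and "walk n T X A" and "walk n T Y B"
  shows "walk n T (\<lambda>k. X k - Y k) (\<lambda>k. A k - B k)"
  using assms linear_edge_diff[OF lin] linear_trellis_pos[OF lin] unfolding walk_def by simp

lemma walk_vertex:
  assumes lin: "linear_trellis sc n T" and X: "walk n T X A"
  shows "X k \<in> tverts T (k mod n)"
proof -
  have "k mod n < n" using linear_trellis_pos[OF lin] by simp
  then show ?thesis using X linear_trellis_edges[OF lin, of "k mod n"] unfolding walk_def by blast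
qed

lemma walk_shift:
  assumes X: "walk n T X A" and per: "\<forall>k. A (k + n) = A k"
  shows "walk n T (\<lambda>k. X (k + n)) A"
  using X per unfolding walk_def by (metis add_Suc mod_add_self2)

lemma periodic_add_mult:
  assumes "\<forall>k. f (k + m) = f k" shows "f (k + q * m) = f (k::nat)"
proof (induction q)
  case (Suc q)
  have "f (k + Suc q * m) = f (k + q * m + m)" by (simp add: algebra_simps)
  also have "\<dots> = f k" using assms Suc by simp
  finally show ?case .
qed simp

lemma periodic_mod: "\<forall>k. f (k + m) = f k \<Longrightarrow> f (k mod m) = f (k::nat)"
  using periodic_add_mult[of f m "k mod m" "k div m"] by simp

section \<open>Fragment one-to-one trellises: labels determine states\<close>

lemma walk_window:
  assumes lin: "linear_trellis sc n T" and F: "fragment_one_to_one n T"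
    and X: "walk n T X A" and Y: "walk n T Y B" and eq: "\<forall>t<n. A (p + t) = B (p + t)"
    and t: "t \<le> n"
  shows "X (p + t) = Y (p + t)"
proof -
  define vs where "vs = map (\<lambda>t. X (p + t)) [0..<Suc n]"
  define vs' where "vs' = map (\<lambda>t. Y (p + t)) [0..<Suc n]"
  define as where "as = map (\<lambda>t. A (p + t)) [0..<n]"
  have "as = map (\<lambda>t. B (p + t)) [0..<n]" unfolding as_def using eq by simp
  moreover have "tpath n T (p mod n) vs as"
    unfolding tpath_def vs_def as_def using walk_vertex[OF lin X, of p] X unfolding walk_def
    by (simp add: mod_add_left_eq nth_map_upt del: upt_Suc)
  moreover have "tpath n T (p mod n) vs' (map (\<lambda>t. B (p + t)) [0..<n])"
    unfolding tpath_def vs'_def using walk_vertex[OF lin Y, of p] Y unfolding walk_def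
    by (simp add: mod_add_left_eq nth_map_upt del: upt_Suc)
  moreover have "p mod n < n" using linear_trellis_pos[OF lin] by simp
  ultimately have "vs = vs'" using F unfolding fragment_one_to_one_def as_def by fastforce
  then have "vs ! t = vs' ! t" by simp
  then show ?thesis using t unfolding vs_def vs'_def by (simp add: nth_map_upt del: upt_Suc)
qed

lemma walk_determined:
  assumes "linear_trellis sc n T" "fragment_one_to_one n T" "walk n T X A" "walk n T Y A"
  shows "X = Y"
  using walk_window[OF assms, of _ 0] by auto

lemma walk_periodic:
  assumes lin: "linear_trellis sc n T" and F: "fragment_one_to_one n T"
    and X: "walk n T X A" and per: "\<forall>k. A (k + n) = A k"
  shows "periodic_walk n T X A"
  using walk_determined[OF lin F walk_shift[OF X per] X] X per
  unfolding periodic_walk_def by metis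

section \<open>i-cycles as closed walks\<close>

lemma last_eq_hd_nth: "length vs = Suc m \<Longrightarrow> last vs = hd vs \<Longrightarrow> vs ! m = vs ! 0"
  by (metis diff_Suc_1 hd_conv_nth last_conv_nth list.size(3) nat.simps(3))

lemma icycle_walk:
  assumes n: "0 < n" and i: "0 < i" and c: "icycle n T i vs as"
  shows "walk n T (\<lambda>k. vs ! (k mod (i * n))) (\<lambda>k. as ! (k mod (i * n)))"
  unfolding walk_def
proof
  fix k
  let ?m = "i * n" let ?r = "k mod ?m"
  have len: "length as = ?m" "length vs = Suc ?m" using c unfolding icycle_def tpath_def by auto
  have closed: "vs ! ?m = vs ! 0" using c len unfolding icycle_def by (simp add: last_eq_hd_nth)
  have r: "?r < ?m" using n i by simp
  have "(vs ! ?r, as ! ?r, vs ! Suc ?r) \<in> tedges T (?r mod n)"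
    using c len r unfolding icycle_def tpath_def by auto
  moreover have "?r mod n = k mod n" by (simp add: mod_mod_cancel)
  moreover have "vs ! (Suc k mod ?m) = vs ! Suc ?r" using closed by (simp add: mod_Suc)
  ultimately show "(vs ! ?r, as ! ?r, vs ! (Suc k mod ?m)) \<in> tedges T (k mod n)" by simp
qed

lemma walk_icycle:
  assumes lin: "linear_trellis sc n T" and X: "walk n T X A" and closed: "X (i * n) = X 0"
  shows "icycle n T i (map X [0..<Suc (i * n)]) (map A [0..<i * n])"
  using walk_vertex[OF lin X, of 0] X closed
  unfolding icycle_def tpath_def walk_def
  by (simp add: nth_map_upt last_map hd_map del: upt_Suc)

lemma icode_transfer:
  assumes lin: "linear_trellis sc n T" and i: "0 < i"
    and sub: "icode n T i \<subseteq> icode n T' i"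
    and X: "walk n T X A" and closed: "X (i * n) = X 0" and per: "\<forall>k. A (k + i * n) = A k"
  shows "\<exists>Y. walk n T' Y A"
proof -
  have n: "0 < n" using linear_trellis_pos[OF lin] .
  have "map A [0..<i * n] \<in> icode n T' i"
    using walk_icycle[OF lin X closed] sub unfolding icode_def by blast
  then obtain vs where c: "icycle n T' i vs (map A [0..<i * n])" unfolding icode_def by blast
  have "(\<lambda>k. map A [0..<i * n] ! (k mod (i * n))) = A"
    using n i periodic_mod[OF per] by auto
  then show ?thesis using icycle_walk[OF n i c] by auto
qed

lemma periodic_walk_transfer:
  assumes lin: "linear_trellis sc n T" and i: "0 < i"
    and sub: "icode n T i \<subseteq> icode n T' i" and X: "periodic_walk n T X A"
  shows "\<exists>Y. walk n T' Y A"
proof -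
  have "X (0 + i * n) = X 0" "\<forall>k. A (k + i * n) = A k"
    using X periodic_add_mult[of _ n] unfolding periodic_walk_def by blast+
  then show ?thesis using icode_transfer[OF lin i sub] X unfolding periodic_walk_def by auto
qed

text \<open>In a reduced trellis every edge lies on a 1-cycle, hence on a periodic walk.\<close>
lemma edge_periodic_walk:
  assumes lin: "linear_trellis sc n T" and red: "reduced n T" and j: "j < n"
    and e: "(v, a, w) \<in> tedges T j"
  shows "\<exists>X A. periodic_walk n T X A \<and> X j = v \<and> A j = a \<and> X (Suc j) = w"
proof -
  have n: "0 < n" using linear_trellis_pos[OF lin] .
  obtain vs as where c: "icycle n T 1 vs as" and on: "(vs ! j, as ! j, vs ! Suc j) = (v, a, w)"
    using red j e unfolding reduced_def by blast
  have "length vs = Suc n" using c unfolding icycle_def tpath_def by auto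
  then have closed: "vs ! n = vs ! 0" using c unfolding icycle_def by (simp add: last_eq_hd_nth)
  define X where "X = (\<lambda>k. vs ! (k mod n))"
  define A where "A = (\<lambda>k. as ! (k mod n))"
  have "periodic_walk n T X A"
    unfolding periodic_walk_def X_def A_def using icycle_walk[OF n _ c] by simp
  moreover have "X j = v" "A j = a" using on j by (auto simp: X_def A_def)
  moreover have "X (Suc j) = w"
    using on closed j by (cases "Suc j = n") (auto simp: X_def)
  ultimately show ?thesis by blast
qed

text \<open>By trimness, every vertex of a reduced trellis lies on a periodic walk.\<close>
lemma vertex_periodic_walk:
  assumes lin: "linear_trellis sc n T" and red: "reduced n T" and j: "j < n"
    and v: "v \<in> tverts T j"
  shows "\<exists>X A. periodic_walk n T X A \<and> X j = v"
  using linear_trellis_out_edge[OF lin j v] edge_periodic_walk[OF lin red j] by blast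

lemma cut_walk:
  assumes lin: "linear_trellis sc n T" and Z: "walk n T Z C"
    and zero_start: "Z j = 0" and zero_end: "Z (j + l) = 0"
    and dvd: "n dvd m" and fits: "j + l < m"
  shows "walk n T (\<lambda>k. if j \<le> k mod m \<and> k mod m \<le> j + l then Z (k mod m) else 0)
                  (\<lambda>k. if j \<le> k mod m \<and> k mod m < j + l then C (k mod m) else 0)"
    (is "walk n T ?E ?B")
  unfolding walk_def
proof
  fix k
  let ?r = "k mod m"
  have time: "?r mod n = k mod n" using dvd by (simp add: mod_mod_cancel)
  have next_r: "Suc k mod m = (if Suc ?r = m then 0 else Suc ?r)" by (simp add: mod_Suc)
  show "(?E k, ?B k, ?E (Suc k)) \<in> tedges T (k mod n)"
  proof (cases "j \<le> ?r \<and> ?r < j + l")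
    case True
    then have "Suc k mod m = Suc ?r" using next_r fits by auto
    moreover have "(Z ?r, C ?r, Z (Suc ?r)) \<in> tedges T (?r mod n)"
      using Z unfolding walk_def by blast
    ultimately show ?thesis using True time by simp
  next
    case outside: False
    have "?E k = 0" using outside zero_end by (cases "?r = j + l") auto
    moreover have "?E (Suc k) = 0"
      using outside zero_start zero_end next_r by (cases "Suc ?r = j") auto
    moreover have "?B k = 0" using outside by auto
    moreover have "(0, 0, 0) \<in> tedges T (k mod n)"
      using linear_edge_zero[OF lin] linear_trellis_pos[OF lin] by simp
    ultimately show ?thesis by simp
  qed
qed

text \<open>One period of the walk, padded with zeros to length i*n, is an i-cycle of T; its
  T'-counterpart has zero labels on the window after the period, so its state at
  the end of the period is 0, and this state coincides with that of the given walk.\<close>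
lemma zero_state_transfer:
  fixes sc :: "'f::field \<Rightarrow> 'v::ab_group_add \<Rightarrow> 'v" and sc' :: "'f \<Rightarrow> 'w::ab_group_add \<Rightarrow> 'w"
  assumes lin: "linear_trellis sc n T" and lin': "linear_trellis sc' n T'"
    and F': "fragment_one_to_one n T'"
    and i: "2 \<le> i" and sub: "icode n T i \<subseteq> icode n T' i"
    and Z: "periodic_walk n T Z C" and j: "j < n" and zero: "Z j = 0"
    and W: "walk n T' W C"
  shows "W j = 0"
proof -
  define m where "m = i * n"
  have "2 * n \<le> m" using i unfolding m_def by simp
  then have m: "2 * n \<le> m" "j + n < m" using j by simp_all
  define E where "E = (\<lambda>k. if j \<le> k mod m \<and> k mod m \<le> j + n then Z (k mod m) else 0)"
  define B where "B = (\<lambda>k. if j \<le> k mod m \<and> k mod m < j + n then C (k mod m) else 0)"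
  have "walk n T Z C" "Z (j + n) = 0" using Z zero unfolding periodic_walk_def by simp_all
  from cut_walk[OF lin this(1) zero this(2) _ m(2)]
  have "walk n T E B" unfolding E_def B_def m_def by simp
  moreover have "E (i * n) = E 0" "\<forall>k. B (k + i * n) = B k" by (simp_all add: E_def B_def m_def)
  ultimately obtain E' where E': "walk n T' E' B"
    using icode_transfer[OF lin _ sub] i by fastforce
  have "B (j + n + t) = 0" if t: "t < n" for t
  proof -
    have "(j + n + t) mod m = (if j + n + t < m then j + n + t else j + n + t - m)"
      using m t by (simp add: mod_if)
    then show ?thesis using m t unfolding B_def by auto
  qed
  then have "E' (j + n) = 0" using walk_window[OF lin' F' E' walk_zero[OF lin'], of "j + n" 0] by simp
  moreover have "\<forall>t<n. B (j + t) = C (j + t)" using m by (simp add: B_def)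
  then have "E' (j + n) = W (j + n)" using walk_window[OF lin' F' E' W, of j n] by simp
  moreover have "W (j + n) = W j"
    using walk_periodic[OF lin' F' W] Z unfolding periodic_walk_def by simp
  ultimately show ?thesis by simp
qed

section \<open>The state correspondence\<close>

definition corresponds :: "nat \<Rightarrow> ('v, 'f) trellis \<Rightarrow> ('w, 'f) trellis \<Rightarrow> nat \<Rightarrow> 'v \<Rightarrow> 'w \<Rightarrow> bool"
  where "corresponds n T T' j v y \<longleftrightarrow>
    (\<exists>X A Y. periodic_walk n T X A \<and> X j = v \<and> walk n T' Y A \<and> Y j = y)"

definition state_map :: "nat \<Rightarrow> ('v, 'f) trellis \<Rightarrow> ('w, 'f) trellis \<Rightarrow> nat \<Rightarrow> 'v \<Rightarrow> 'w"
  where "state_map n T T' j v = (SOME y. corresponds n T T' j v y)"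

text \<open>By linearity, the key lemma says that the correspondence is a function.\<close>
lemma corresponds_unique:
  fixes sc :: "'f::field \<Rightarrow> 'v::ab_group_add \<Rightarrow> 'v" and sc' :: "'f \<Rightarrow> 'w::ab_group_add \<Rightarrow> 'w"
  assumes lin: "linear_trellis sc n T" and lin': "linear_trellis sc' n T'"
    and F': "fragment_one_to_one n T'"
    and i: "2 \<le> i" and sub: "icode n T i \<subseteq> icode n T' i" and j: "j < n"
    and y1: "corresponds n T T' j v y1" and y2: "corresponds n T T' j v y2"
  shows "y1 = y2"
proof -
  obtain X1 A1 Y1 where 1: "periodic_walk n T X1 A1" "X1 j = v" "walk n T' Y1 A1" "Y1 j = y1"
    using y1 unfolding corresponds_def by blast
  obtain X2 A2 Y2 where 2: "periodic_walk n T X2 A2" "X2 j = v" "walk n T' Y2 A2" "Y2 j = y2"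
    using y2 unfolding corresponds_def by blast
  have "periodic_walk n T (\<lambda>k. X1 k - X2 k) (\<lambda>k. A1 k - A2 k)"
    using 1(1) 2(1) walk_diff[OF lin] unfolding periodic_walk_def by simp
  from zero_state_transfer[OF lin lin' F' i sub this j _ walk_diff[OF lin' 1(3) 2(3)]]
  show ?thesis using 1 2 by simp
qed

lemma state_map_eq:
  fixes sc :: "'f::field \<Rightarrow> 'v::ab_group_add \<Rightarrow> 'v" and sc' :: "'f \<Rightarrow> 'w::ab_group_add \<Rightarrow> 'w"
  assumes lin: "linear_trellis sc n T" and lin': "linear_trellis sc' n T'"
    and F': "fragment_one_to_one n T'"
    and i: "2 \<le> i" and sub: "icode n T i \<subseteq> icode n T' i" and j: "j < n"
    and y: "corresponds n T T' j v y"
  shows "state_map n T T' j v = y"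
  using someI[of "corresponds n T T' j v", OF y] corresponds_unique[OF lin lin' F' i sub j _ y]
  unfolding state_map_def by blast

lemma state_map_walk:
  fixes sc :: "'f::field \<Rightarrow> 'v::ab_group_add \<Rightarrow> 'v" and sc' :: "'f \<Rightarrow> 'w::ab_group_add \<Rightarrow> 'w"
  assumes lin: "linear_trellis sc n T" and lin': "linear_trellis sc' n T'"
    and F': "fragment_one_to_one n T'"
    and i: "2 \<le> i" and sub: "icode n T i \<subseteq> icode n T' i"
    and X: "periodic_walk n T X A"
  shows "walk n T' (\<lambda>k. state_map n T T' (k mod n) (X k)) A"
proof -
  obtain Y where Y: "walk n T' Y A" using periodic_walk_transfer[OF lin _ sub X] i by auto
  have "Y (k mod n) = Y k" "X (k mod n) = X k" for k
    using periodic_mod walk_periodic[OF lin' F' Y] X unfolding periodic_walk_def by metis+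
  then have "corresponds n T T' (k mod n) (X k) (Y k)" for k
    using X Y unfolding corresponds_def by metis
  then have "state_map n T T' (k mod n) (X k) = Y k" for k
    using state_map_eq[OF lin lin' F' i sub] linear_trellis_pos[OF lin] by simp
  then show ?thesis using Y by simp
qed

lemma state_map_edge:
  fixes sc :: "'f::field \<Rightarrow> 'v::ab_group_add \<Rightarrow> 'v" and sc' :: "'f \<Rightarrow> 'w::ab_group_add \<Rightarrow> 'w"
  assumes lin: "linear_trellis sc n T" and lin': "linear_trellis sc' n T'"
    and F': "fragment_one_to_one n T'" and red: "reduced n T"
    and i: "2 \<le> i" and sub: "icode n T i \<subseteq> icode n T' i" and j: "j < n"
    and e: "(v, a, w) \<in> tedges T j"
  shows "(state_map n T T' j v, a, state_map n T T' (Suc j mod n) w) \<in> tedges T' j"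
proof -
  obtain X A where X: "periodic_walk n T X A" "X j = v" "A j = a" "X (Suc j) = w"
    using edge_periodic_walk[OF lin red j e] by blast
  from state_map_walk[OF lin lin' F' i sub X(1)] show ?thesis
    using X j unfolding walk_def by (metis mod_less)
qed

lemma state_map_inverse:
  fixes sc :: "'f::field \<Rightarrow> 'v::ab_group_add \<Rightarrow> 'v" and sc' :: "'f \<Rightarrow> 'w::ab_group_add \<Rightarrow> 'w"
  assumes lin: "linear_trellis sc n T" and lin': "linear_trellis sc' n T'"
    and F: "fragment_one_to_one n T" and F': "fragment_one_to_one n T'" and red: "reduced n T"
    and i: "2 \<le> i" and eq: "icode n T i = icode n T' i" and j: "j < n"
    and v: "v \<in> tverts T j"
  shows "state_map n T T' j v \<in> tverts T' j" and "state_map n T' T j (state_map n T T' j v) = v"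
proof -
  obtain X A where X: "periodic_walk n T X A" "X j = v"
    using vertex_periodic_walk[OF lin red j v] by blast
  define Y where "Y = (\<lambda>k. state_map n T T' (k mod n) (X k))"
  have Y: "walk n T' Y A" using state_map_walk[OF lin lin' F' i _ X(1)] eq unfolding Y_def by simp
  have Yj: "Y j = state_map n T T' j v" using X(2) j by (simp add: Y_def)
  show "state_map n T T' j v \<in> tverts T' j" using walk_vertex[OF lin' Y, of j] Yj j by simp
  have "periodic_walk n T' Y A"
    using walk_periodic[OF lin' F' Y] X(1) unfolding periodic_walk_def by blast
  then have "corresponds n T' T j (Y j) v" using X unfolding corresponds_def periodic_walk_def by blast
  then show "state_map n T' T j (state_map n T T' j v) = v"
    using state_map_eq[OF lin' lin F i _ j] eq Yj by simp
qed

theorem iso_of_equal_icode: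
  fixes sc :: "'f::field \<Rightarrow> 'v::ab_group_add \<Rightarrow> 'v" and sc' :: "'f \<Rightarrow> 'w::ab_group_add \<Rightarrow> 'w"
  assumes lin: "linear_trellis sc n T" and lin': "linear_trellis sc' n T'"
    and F: "fragment_one_to_one n T" and F': "fragment_one_to_one n T'"
    and red: "reduced n T" and red': "reduced n T'"
    and i: "1 < i" and eq: "icode n T i = icode n T' i"
  shows "trellis_iso n T T'"
  unfolding trellis_iso_def
proof (intro exI allI impI conjI)
  fix j assume j: "j < n"
  have i2: "2 \<le> i" using i by simp
  let ?f = "state_map n T T'" and ?g = "state_map n T' T"
  note f_inv = state_map_inverse[OF lin lin' F F' red i2 eq]
  note g_inv = state_map_inverse[OF lin' lin F' F red' i2 eq[symmetric]]
  show "bij_betw (?f j) (tverts T j) (tverts T' j)"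
    by (rule bij_betw_byWitness[where f' = "?g j"]) (use f_inv g_inv j in auto)
  have j1: "Suc j mod n < n" using j by simp
  show "\<forall>v\<in>tverts T j. \<forall>w\<in>tverts T (Suc j mod n). \<forall>a.
           (v, a, w) \<in> tedges T j \<longleftrightarrow> (?f j v, a, ?f (Suc j mod n) w) \<in> tedges T' j"
  proof (intro ballI allI iffI)
    fix v w a assume v: "v \<in> tverts T j" and w: "w \<in> tverts T (Suc j mod n)"
    show "(?f j v, a, ?f (Suc j mod n) w) \<in> tedges T' j" if "(v, a, w) \<in> tedges T j"
      using state_map_edge[OF lin lin' F' red i2 _ j that] eq by simp
    show "(v, a, w) \<in> tedges T j" if "(?f j v, a, ?f (Suc j mod n) w) \<in> tedges T' j"
      using state_map_edge[OF lin' lin F red' i2 _ j that] eq f_inv(2)[OF j v] f_inv(2)[OF j1 w]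
      by simp
  qed
qed

definition segment :: "nat \<Rightarrow> ('v, 'f) trellis \<Rightarrow> nat \<Rightarrow> (nat \<Rightarrow> 'v) \<Rightarrow> (nat \<Rightarrow> 'f) \<Rightarrow> bool"
  where "segment n T j Q L \<longleftrightarrow> (\<forall>t<n. (Q t, L t, Q (Suc t)) \<in> tedges T ((j + t) mod n))"

lemma segment_add:
  assumes lin: "linear_trellis sc n T" and "segment n T j Q L" and "segment n T j P K"
  shows "segment n T j (\<lambda>t. Q t + P t) (\<lambda>t. L t + K t)"
  using assms linear_edge_add[OF lin] linear_trellis_pos[OF lin] unfolding segment_def by simp

lemma segment_diff:
  fixes sc :: "'f::field \<Rightarrow> 'v::ab_group_add \<Rightarrow> 'v"
  assumes lin: "linear_trellis sc n T" and "segment n T j Q L" and "segment n T j P K"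
  shows "segment n T j (\<lambda>t. Q t - P t) (\<lambda>t. L t - K t)"
  using assms linear_edge_diff[OF lin] linear_trellis_pos[OF lin] unfolding segment_def by simp

lemma segment_end_vertex:
  assumes lin: "linear_trellis sc n T" and Q: "segment n T j Q L"
  shows "Q n \<in> tverts T (j mod n)"
proof -
  have n: "0 < n" using linear_trellis_pos[OF lin] .
  let ?k = "(j + (n - 1)) mod n"
  have "n - 1 < n" "Suc (n - 1) = n" using n by simp_all
  then have "(Q (n - 1), L (n - 1), Q n) \<in> tedges T ?k" using Q unfolding segment_def by metis
  moreover have "Suc ?k mod n = j mod n" using n by (simp add: mod_Suc_eq)
  ultimately show ?thesis using linear_trellis_edges[OF lin, of ?k] n by auto
qed

lemma rotate_mod:
  assumes "j < (n::nat)" shows "(j + (k + n - j) mod n) mod n = k mod n"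
proof -
  have "(j + (k + n - j) mod n) mod n = (j + (k + n - j)) mod n" by (simp add: mod_add_right_eq)
  also have "j + (k + n - j) = k + n" using assms by simp
  finally show ?thesis by simp
qed

lemma unrotate_mod:
  assumes "j < (n::nat)" shows "((j + t) mod n + n - j) mod n = t mod n"
proof -
  have "((j + t) mod n + n - j) mod n = ((j + t) mod n + (n - j)) mod n" using assms by simp
  also have "\<dots> = (j + t + (n - j)) mod n" by (rule mod_add_left_eq)
  also have "j + t + (n - j) = t + n" using assms by simp
  finally show ?thesis by simp
qed

lemma closed_segment_icycle:
  assumes lin: "linear_trellis sc n T" and j: "j < n"
    and Q: "segment n T j Q L" and closed: "Q 0 = Q n"
  shows "icycle n T 1 (map (\<lambda>k. Q ((k + n - j) mod n)) [0..<Suc n])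
                      (map (\<lambda>k. L ((k + n - j) mod n)) [0..<n])"
proof -
  have rotated: "walk n T (\<lambda>k. Q ((k + n - j) mod n)) (\<lambda>k. L ((k + n - j) mod n))"
    unfolding walk_def
  proof
    fix k
    let ?t = "(k + n - j) mod n"
    have "?t < n" using j by simp
    then have "(Q ?t, L ?t, Q (Suc ?t)) \<in> tedges T ((j + ?t) mod n)" using Q unfolding segment_def by blast
    moreover have "Q (Suc ?t) = Q ((Suc k + n - j) mod n)"
      using j closed by (simp add: Suc_diff_le mod_Suc)
    ultimately show "(Q ?t, L ?t, Q ((Suc k + n - j) mod n)) \<in> tedges T (k mod n)"
      using rotate_mod[OF j] by simp
  qed
  have "1 * n + n - j = (0 + n - j) + n" using j by simp
  then have "(\<lambda>k. Q ((k + n - j) mod n)) (1 * n) = (\<lambda>k. Q ((k + n - j) mod n)) 0"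
    by (metis mod_add_self2)
  from walk_icycle[OF lin rotated this] show ?thesis by simp
qed

section \<open>Merging along a zero-labelled segment\<close>

definition redirect :: "nat \<Rightarrow> nat \<Rightarrow> 'v \<Rightarrow> 'v \<Rightarrow> nat \<Rightarrow> 'v \<Rightarrow> 'v" where
  "redirect n j v w k z = (if k mod n = j \<and> z = w then v else z)"

lemma merge_edges:
  "k < n \<Longrightarrow> tedges (merge n T j v w) k =
     (\<lambda>(a, l, b). (redirect n j v w k a, l, redirect n j v w (Suc k) b)) ` tedges T k"
  by (simp add: merge_def redirect_def)

lemma merge_keeps_cycles:
  assumes j: "j < n" and v: "v \<in> tverts T j" and vw: "v \<noteq> w"
  shows "icode n T 1 \<subseteq> icode n (merge n T j v w) 1"
proof
  fix as assume "as \<in> icode n T 1"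
  then obtain vs where c: "icycle n T 1 vs as" unfolding icode_def by blast
  let ?M = "merge n T j v w" and ?r = "redirect n j v w"
  have len: "length as = n" "length vs = Suc n" using c unfolding icycle_def tpath_def by auto
  have closed: "vs ! n = vs ! 0" using c len unfolding icycle_def by (simp add: last_eq_hd_nth)
  define vs' where "vs' = map (\<lambda>k. ?r k (vs ! k)) [0..<Suc n]"
  have vs': "vs' ! k = ?r k (vs ! k)" if "k \<le> n" for k
    using that unfolding vs'_def by (simp del: upt_Suc)
  have "icycle n ?M 1 vs' as"
    unfolding icycle_def tpath_def
  proof (intro conjI allI impI)
    show "length vs' = Suc (length as)" "length as = 1 * n" using len by (simp_all add: vs'_def)
    show "vs' ! 0 \<in> tverts ?M (0 mod n)"
      using c vs'[of 0] v vw unfolding icycle_def tpath_def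
      by (cases "j = 0") (auto simp: merge_def redirect_def)
    show "last vs' = hd vs'"
      using vs'[of n] vs'[of 0] closed len
      by (simp add: vs'_def last_conv_nth hd_conv_nth redirect_def del: upt_Suc)
  next
    fix k assume "k < length as"
    then have k: "k < n" using len by simp
    then have "(vs ! k, as ! k, vs ! Suc k) \<in> tedges T k"
      using c len unfolding icycle_def tpath_def by auto
    then have "(vs' ! k, as ! k, vs' ! Suc k) \<in> tedges ?M k"
      using vs'[of k] vs'[of "Suc k"] k by (force simp: merge_edges)
    then show "(vs' ! k, as ! k, vs' ! Suc k) \<in> tedges ?M ((0 + k) mod n)" using k by simp
  qed
  then show "as \<in> icode n ?M 1" unfolding icode_def by blast
qed

lemma mod_add_ne:
  assumes "j < (n::nat)" "0 < s" "s < n"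
  shows "(j + s) mod n \<noteq> j"
  using assms by (cases "j + s < n") (auto simp: mod_if)

lemma merged_cycle_edge_lift:
  assumes j: "j < n" and c: "icycle n (merge n T j v w) 1 vs as" and t: "t < n"
  shows "\<exists>x y. (x, as ! ((j + t) mod n), y) \<in> tedges T ((j + t) mod n) \<and>
      redirect n j v w (j + t) x = vs ! ((j + t) mod n) \<and>
      redirect n j v w (Suc (j + t)) y = vs ! (Suc (j + t) mod n)"
proof -
  let ?r = "redirect n j v w" and ?k = "(j + t) mod n"
  have len: "length as = n" "length vs = Suc n" using c unfolding icycle_def tpath_def by auto
  have closed: "vs ! n = vs ! 0" using c len unfolding icycle_def by (simp add: last_eq_hd_nth)
  have k: "?k < n" using j by simp
  then have "(vs ! ?k, as ! ?k, vs ! Suc ?k) \<in> tedges (merge n T j v w) ?k"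
    using c len unfolding icycle_def tpath_def by auto
  then obtain x y where "(x, as ! ?k, y) \<in> tedges T ?k"
    and "?r ?k x = vs ! ?k" and "?r (Suc ?k) y = vs ! Suc ?k"
    using k by (auto simp: merge_edges)
  moreover have "?r ?k = ?r (j + t)" "?r (Suc ?k) = ?r (Suc (j + t))"
    by (simp_all add: redirect_def fun_eq_iff mod_Suc_eq)
  moreover have "vs ! Suc ?k = vs ! (Suc (j + t) mod n)"
  proof -
    have "vs ! (Suc (j + t) mod n) = vs ! (Suc ?k mod n)" by (simp add: mod_Suc_eq)
    then show ?thesis using k closed by (cases "Suc ?k = n") auto
  qed
  ultimately show ?thesis by auto
qed

lemma merged_cycle_lift:
  assumes j: "j < n" and c: "icycle n (merge n T j v w) 1 vs as"
  shows "\<exists>R. segment n T j R (\<lambda>t. as ! ((j + t) mod n)) \<and>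
             (R 0 = R n \<or> R 0 = v \<and> R n = w \<or> R 0 = w \<and> R n = v)"
proof -
  let ?r = "redirect n j v w"
  obtain x y where xy: "\<And>t. t < n \<Longrightarrow>
      (x t, as ! ((j + t) mod n), y t) \<in> tedges T ((j + t) mod n) \<and>
      ?r (j + t) (x t) = vs ! ((j + t) mod n) \<and> ?r (Suc (j + t)) (y t) = vs ! (Suc (j + t) mod n)"
    using merged_cycle_edge_lift[OF j c] by metis
  define R where "R = (\<lambda>t. if t < n then x t else y (n - 1))"
  have "R (Suc t) = y t" if t: "t < n" for t
  proof (cases "Suc t = n")
    case True
    then show ?thesis by (simp add: R_def flip: True)
  next
    case False
    then have "(j + Suc t) mod n \<noteq> j" using mod_add_ne[OF j, of "Suc t"] t by simp
    then show ?thesis using xy[of t] xy[of "Suc t"] t False by (simp add: R_def redirect_def)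
  qed
  then have "segment n T j R (\<lambda>t. as ! ((j + t) mod n))"
    using xy unfolding segment_def R_def by auto
  moreover have "?r j (R 0) = ?r j (R n)"
  proof -
    have "0 < n" using j by simp
    then have "Suc (j + (n - 1)) = j + n" by simp
    moreover have "?r (j + n) = ?r j" by (simp add: redirect_def fun_eq_iff)
    ultimately show ?thesis using xy[of 0] xy[of "n - 1"] j by (simp add: R_def)
  qed
  then have "R 0 = R n \<or> R 0 = v \<and> R n = w \<or> R 0 = w \<and> R n = v"
    using j by (auto simp: redirect_def split: if_splits)
  ultimately show ?thesis by blast
qed

lemma close_segment:
  fixes sc :: "'f::field \<Rightarrow> 'v::ab_group_add \<Rightarrow> 'v"
  assumes lin: "linear_trellis sc n T"
    and P: "segment n T j P (\<lambda>_. 0)" and P0: "P 0 = v" and Pn: "P n = w"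
    and R: "segment n T j R L" and ends: "R 0 = R n \<or> R 0 = v \<and> R n = w \<or> R 0 = w \<and> R n = v"
  shows "\<exists>Q. segment n T j Q L \<and> Q 0 = Q n"
  using ends
proof (elim disjE conjE)
  assume "R 0 = v" "R n = w"
  then show ?thesis using segment_diff[OF lin R P] P0 Pn by (intro exI[of _ "\<lambda>t. R t - P t"]) simp
next
  assume "R 0 = w" "R n = v"
  then show ?thesis using segment_add[OF lin R P] P0 Pn
    by (intro exI[of _ "\<lambda>t. R t + P t"]) (simp add: add.commute)
qed (use R in blast)

lemma merge_along_zero_segment:
  fixes sc :: "'f::field \<Rightarrow> 'v::ab_group_add \<Rightarrow> 'v"
  assumes lin: "linear_trellis sc n T" and j: "j < n" and vw: "v \<noteq> w" and v: "v \<in> tverts T j"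
    and P: "segment n T j P (\<lambda>_. 0)" and P0: "P 0 = v" and Pn: "P n = w"
  shows "icode n (merge n T j v w) 1 = icode n T 1"
proof
  show "icode n T 1 \<subseteq> icode n (merge n T j v w) 1" using merge_keeps_cycles[OF j v vw] .
  show "icode n (merge n T j v w) 1 \<subseteq> icode n T 1"
  proof
    fix as assume "as \<in> icode n (merge n T j v w) 1"
    then obtain vs where c: "icycle n (merge n T j v w) 1 vs as" unfolding icode_def by blast
    have len: "length as = n" using c unfolding icycle_def by simp
    define L where "L = (\<lambda>t. as ! ((j + t) mod n))"
    obtain R where "segment n T j R L" "R 0 = R n \<or> R 0 = v \<and> R n = w \<or> R 0 = w \<and> R n = v"
      using merged_cycle_lift[OF j c] unfolding L_def by blast
    then obtain Q where "segment n T j Q L" "Q 0 = Q n" using close_segment[OF lin P P0 Pn] by blast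
    from closed_segment_icycle[OF lin j this]
    have "map (\<lambda>k. L ((k + n - j) mod n)) [0..<n] \<in> icode n T 1" unfolding icode_def by blast
    moreover have "map (\<lambda>k. L ((k + n - j) mod n)) [0..<n] = as"
      using len rotate_mod[OF j] by (simp add: L_def list_eq_iff_nth_eq)
    ultimately show "as \<in> icode n T 1" by simp
  qed
qed

section \<open>Nonmergeable one-to-one trellises are fragment one-to-one\<close>

text \<open>In a one-to-one linear trellis a closed zero-labelled segment vanishes: rotated,
  it is a 1-cycle with the same labels as the zero cycle.\<close>
lemma closed_zero_segment_vanishes:
  fixes sc :: "'f::field \<Rightarrow> 'v::ab_group_add \<Rightarrow> 'v"
  assumes lin: "linear_trellis sc n T" and oo: "one_to_one n T" and j: "j < n"
    and P: "segment n T j P (\<lambda>_. 0)" and closed: "P 0 = P n" and t: "t \<le> n"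
  shows "P t = 0"
proof -
  let ?cyc = "map (\<lambda>k. P ((k + n - j) mod n)) [0..<Suc n]"
  have "icycle n T 1 ?cyc (map (\<lambda>k. 0) [0..<n])"
    using closed_segment_icycle[OF lin j P closed] by simp
  moreover have "icycle n T 1 (map (\<lambda>k. 0) [0..<Suc n]) (map (\<lambda>k. 0) [0..<n])"
    using walk_icycle[OF lin walk_zero[OF lin], of 1] by simp
  ultimately have zero: "?cyc = map (\<lambda>k. 0) [0..<Suc n]"
    using oo unfolding one_to_one_def by blast
  have "(j + t) mod n < n" using j by simp
  then have idx: "(j + t) mod n < Suc n - 0" by simp
  have "P t = P (t mod n)" using t closed by (cases "t = n") auto
  also have "\<dots> = ?cyc ! ((j + t) mod n)"
    using unrotate_mod[OF j] by (simp add: nth_map_upt[OF idx] del: upt_Suc)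
  also have "\<dots> = 0" unfolding zero by (simp add: nth_map_upt[OF idx] del: upt_Suc)
  finally show ?thesis .
qed

text \<open>Second statement reduced to the first: two distinct paths of length n from
  V_j with the same labels differ by a nonzero zero-labelled segment P. If P is
  closed it rotates to a nonzero zero-labelled 1-cycle, contradicting one-to-one
  (the zero cycle has the same labels); otherwise its endpoints can be merged.\<close>
lemma fragment_one_to_one_if_nonmergeable:
  fixes sc :: "'f::field \<Rightarrow> 'v::ab_group_add \<Rightarrow> 'v"
  assumes lin: "linear_trellis sc n T" and nm: "nonmergeable n T" and oo: "one_to_one n T"
  shows "fragment_one_to_one n T"
  unfolding fragment_one_to_one_def
proof (intro allI impI notI)
  fix j vs vs' as as'
  assume j: "j < n" and p: "tpath n T j vs as" and p': "tpath n T j vs' as'"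
    and len: "length as = n" and len': "length as' = n"
    and ne: "(vs, as) \<noteq> (vs', as')" and same: "as = as'"
  have segs: "segment n T j ((!) vs) ((!) as)" "segment n T j ((!) vs') ((!) as)"
    using p p' len len' same unfolding tpath_def segment_def by auto
  define P where "P = (\<lambda>t. vs ! t - vs' ! t)"
  have P: "segment n T j P (\<lambda>_. 0)"
    using segment_diff[OF lin segs] unfolding P_def by simp
  have "length vs = Suc n" "length vs' = Suc n" using p p' len len' unfolding tpath_def by auto
  then obtain t0 where t0: "t0 \<le> n" "P t0 \<noteq> 0"
    using ne same unfolding P_def by (metis nth_equalityI less_Suc_eq_le right_minus_eq)
  show False
  proof (cases "P 0 = P n")
    case True
    then show False using closed_zero_segment_vanishes[OF lin oo j P _ t0(1)] t0(2) by simp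
  next
    case False
    have "vs ! 0 \<in> tverts T j" "vs' ! 0 \<in> tverts T j" using p p' j unfolding tpath_def by auto
    moreover have "vs ! n \<in> tverts T j" "vs' ! n \<in> tverts T j"
      using segment_end_vertex[OF lin segs(1)] segment_end_vertex[OF lin segs(2)] j by auto
    ultimately have "P 0 \<in> tverts T j" "P n \<in> tverts T j"
      using linear_vertex_diff[OF lin j] unfolding P_def by auto
    with merge_along_zero_segment[OF lin j False _ P refl refl] show False
      using nm j False unfolding nonmergeable_def by blast
  qed
qed

theorem mainTheorem15:
  fixes sc :: "'f::{field,finite} \<Rightarrow> 'v::ab_group_add \<Rightarrow> 'v"
    and sc' :: "'f \<Rightarrow> 'w::ab_group_add \<Rightarrow> 'w"
    and T :: "('v, 'f) trellis" and T' :: "('w, 'f) trellis"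
    and n i :: nat
  shows
    "(linear_trellis sc n T \<and> linear_trellis sc' n T' \<and>
      fragment_one_to_one n T \<and> fragment_one_to_one n T' \<and>
      connected_trellis n T \<and> connected_trellis n T' \<and>
      reduced n T \<and> reduced n T' \<and>
      i > 1 \<and> icode n T i = icode n T' i \<longrightarrow> trellis_iso n T T') \<and>
     (linear_trellis sc n T \<and> linear_trellis sc' n T' \<and>
      nonmergeable n T \<and> nonmergeable n T' \<and>
      one_to_one n T \<and> one_to_one n T' \<and>
      reduced n T \<and> reduced n T' \<and>
      i > 1 \<and> icode n T i = icode n T' i \<longrightarrow> trellis_iso n T T')"
proof (intro conjI impI)
  show "trellis_iso n T T'"
    if "linear_trellis sc n T \<and> linear_trellis sc' n T' \<and>
      fragment_one_to_one n T \<and> fragment_one_to_one n T' \<and>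
      connected_trellis n T \<and> connected_trellis n T' \<and>
      reduced n T \<and> reduced n T' \<and>
      i > 1 \<and> icode n T i = icode n T' i"
    using that iso_of_equal_icode by blast
  show "trellis_iso n T T'"
    if h: "linear_trellis sc n T \<and> linear_trellis sc' n T' \<and>
      nonmergeable n T \<and> nonmergeable n T' \<and>
      one_to_one n T \<and> one_to_one n T' \<and>
      reduced n T \<and> reduced n T' \<and>
      i > 1 \<and> icode n T i = icode n T' i"
  proof -
    have "fragment_one_to_one n T" "fragment_one_to_one n T'"
      using h fragment_one_to_one_if_nonmergeable by blast+
    with h show ?thesis using iso_of_equal_icode by blast
  qed
qed

end
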